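(* Fix $q\in[0,1)$ and $N\in\mathbb N$. Let $\boldsymbol\zeta=(\zeta_t)_{t\ge0}$ be the multi-species ASEP on $\mathbb Z$ with $\zeta_0$ the identity; $\boldsymbol\xi=(\xi_t)_{t\ge0}$ the biased card shuffling of size $N$ with $\xi_0$ the identity of $[N]$; $\boldsymbol\lambda=(\lambda_t)_{t\ge0}$ the biased card shuffling of size $N$ started from an arbitrary deterministic $\lambda_0\in S_N$; and $\overline{\boldsymbol\xi}=(\overline\xi_t)_{t\ge0}$ the stationary biased card shuffling of size $N$ ($\overline\xi_0\sim\mathcal M_N$, independent of the Poisson processes), all four coupled under the basic coupling. For $k\in\llbracket0,N\rrbracket$ and $t\ge0$ set $\xi^k_t(x)=\mathbb 1[\xi_t(x)\le k]$, $\lambda^k_t(x)=\mathbb 1[\lambda_t(x)\le k]$, $\overline\xi^k_t(x)=\mathbb 1[\overline\xi_t(x)\le k]$ for $x\in[N]$, and $\zeta^k_t(x)=\mathbb 1[\zeta_t(x)\le k]$ for $x\in\mathbb Z$. Then almost surely, for every $k\in\llbracket0,N\rrbracket$ and $t\ge0$, \[ h\{\xi^k_t\}\le h\{\lambda^k_t\},\qquad h\{\xi^k_t\}\le h\{\zeta^k_t\},\qquad h\{\xi^k_t\}\le h\{\overline\xi^k_t\}, \] where $f\le g$ means $f(x)\le g(x)$ for all $x\in\mathbb Z$.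
   Context: $\llbracket x,y\rrbracket$ is the set of integers in $[x,y]$, $[N]=\llbracket1,N\rrbracket$, $S_N$ the bijections of $[N]$. Mallows measure: $\mathcal M_N(w)\propto q^{\#\{i<j:\,w(i)<w(j)\}}$. Multi-species dynamics on a domain $D$ ($D=\mathbb Z$ or a finite integer interval), state a bijection $\sigma:D\to D$: each nearest-neighbour pair $x,x+1\in D$ swaps its values at rate $1$ if $\sigma(x)<\sigma(x+1)$ and at rate $q$ otherwise; on $D=[N]$ this is the biased card shuffling, on $D=\mathbb Z$ the multi-species ASEP. Basic coupling: take independent Poisson point processes $\Pi_1,\Pi_q$ on $\mathbb Z\times[0,\infty)$ with intensities $1$ and $q$ (times Lebesgue $\times$ counting); at each $(x,s)\in\Pi_1$ with $x,x+1\in D$, swap the values at $x,x+1$ if just before time $s$ the value at $x$ is smaller than at $x+1$; at each $(x,s)\in\Pi_q$ with $x,x+1\in D$, swap if the value at $x$ is larger. All processes are driven by the same $\Pi_1,\Pi_q$. Height function: for $\omega:\mathbb Z\to\{0,1\}$ eventually constant as $x\to-\infty$, $h\{\omega\}:\mathbb Z\to\mathbb Z$ is defined by $h\{\omega\}(x)-h\{\omega\}(x-1)=1-2\omega(x)$, with $h\{\omega\}(x)=x$ for all small $x$ if $\omega=0$ near $-\infty$, and $h\{\omega\}(x)=-x$ for all small $x$ if $\omega=1$ near $-\infty$. For $\omega:\llbracket m,n\rrbracket\to\{0,1\}$, $h\{\omega\}$ is defined by extending $\omega$ by $0$ on $x<m$ and by $1$ on $x>n$. *)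

theory Defs
  imports "HOL-Probability.Probability"
begin

definition exp1 :: "real measure" where
  "exp1 = density lborel (\<lambda>s. ennreal (exponential_density 1 s))"

definition clock_space :: "(int \<times> nat \<Rightarrow> real) measure" where
  "clock_space = PiM UNIV (\<lambda>_. exp1)"

text \<open>The Poisson point process of intensity r (times Lebesgue x counting): at site x the
  arrival times are the partial sums of the Exp(r) variables E(x,i)/r. For r = 0 it is empty.\<close>

definition arrivals :: "real \<Rightarrow> (int \<times> nat \<Rightarrow> real) \<Rightarrow> (int \<times> real) set" where
  "arrivals r E = {(x, s). r > 0 \<and> (\<exists>n. s = (\<Sum>i\<le>n. E (x, i)) / r)}"

definition perms :: "nat \<Rightarrow> (int \<Rightarrow> int) set" where
  "perms N = {w. bij_betw w {1..int N} {1..int N} \<and> (\<forall>x. x \<notin> {1..int N} \<longrightarrow> w x = x)}"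

definition noninv :: "nat \<Rightarrow> (int \<Rightarrow> int) \<Rightarrow> nat" where
  "noninv N w = card {(i, j). i \<in> {1..int N} \<and> j \<in> {1..int N} \<and> i < j \<and> w i < w j}"

definition mallows_weight :: "nat \<Rightarrow> real \<Rightarrow> (int \<Rightarrow> int) \<Rightarrow> real" where
  "mallows_weight N q w = (if w \<in> perms N then q ^ noninv N w else 0)"

definition mallows :: "nat \<Rightarrow> real \<Rightarrow> (int \<Rightarrow> int) measure" where
  "mallows N q = density (count_space UNIV)
     (\<lambda>w. ennreal (mallows_weight N q w / (\<Sum>v\<in>perms N. mallows_weight N q v)))"

definition left_limit :: "(real \<Rightarrow> int \<Rightarrow> int) \<Rightarrow> real \<Rightarrow> int \<Rightarrow> int" where
  "left_limit \<sigma> t x = (THE v. \<exists>\<epsilon>>0. \<forall>s. t - \<epsilon> < s \<and> s < t \<longrightarrow> \<sigma> s x = v)"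

definition active :: "int set \<Rightarrow> (int \<times> real) set \<Rightarrow> (int \<times> real) set \<Rightarrow> (int \<Rightarrow> int) \<Rightarrow> real \<Rightarrow> int set" where
  "active D P1 Pq \<tau> t = {x. x \<in> D \<and> x + 1 \<in> D \<and>
      (((x, t) \<in> P1 \<and> \<tau> x < \<tau> (x + 1)) \<or> ((x, t) \<in> Pq \<and> \<tau> x > \<tau> (x + 1)))}"

definition update :: "int set \<Rightarrow> (int \<times> real) set \<Rightarrow> (int \<times> real) set \<Rightarrow> (int \<Rightarrow> int) \<Rightarrow> real \<Rightarrow> int \<Rightarrow> int" where
  "update D P1 Pq \<tau> t x =
     (if x \<in> active D P1 Pq \<tau> t then \<tau> (x + 1)
      else if x - 1 \<in> active D P1 Pq \<tau> t then \<tau> (x - 1)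
      else \<tau> x)"

text \<open>\<sigma> is a trajectory on domain D (for times t >= 0) driven by the point sets P1, Pq:
  every site is piecewise constant (right-continuous with left limits), and at each
  time t > 0 the configuration is obtained from the left limit by performing the swaps
  of the clocks ringing at time t.\<close>

definition driven :: "int set \<Rightarrow> (int \<times> real) set \<Rightarrow> (int \<times> real) set \<Rightarrow> (real \<Rightarrow> int \<Rightarrow> int) \<Rightarrow> bool" where
  "driven D P1 Pq \<sigma> \<longleftrightarrow>
     (\<forall>t\<ge>0. \<forall>x\<in>D. \<exists>\<epsilon>>0. \<forall>s. t \<le> s \<and> s < t + \<epsilon> \<longrightarrow> \<sigma> s x = \<sigma> t x) \<and>
     (\<forall>t>0. \<forall>x\<in>D. \<exists>v. \<exists>\<epsilon>>0. \<forall>s. t - \<epsilon> < s \<and> s < t \<longrightarrow> \<sigma> s x = v) \<and>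
     (\<forall>t>0. \<forall>x\<in>D. \<sigma> t x = update D P1 Pq (left_limit \<sigma> t) t x)"

text \<open>For \<omega> : Z -> {0,1} eventually constant near -inf: h(x) - h(x-1) = 1 - 2 \<omega>(x),
  h(x) = x for small x if \<omega> = 0 near -inf, h(x) = -x for small x if \<omega> = 1 near -inf.\<close>

definition height :: "(int \<Rightarrow> int) \<Rightarrow> int \<Rightarrow> int" where
  "height \<omega> x = (THE v. \<exists>y\<le>x. (\<forall>z\<le>y. \<omega> z = \<omega> y) \<and>
       v = (if \<omega> y = 0 then y else - y) + (\<Sum>z\<in>{y<..x}. 1 - 2 * \<omega> z))"

definition ext_fin :: "int \<Rightarrow> int \<Rightarrow> (int \<Rightarrow> int) \<Rightarrow> int \<Rightarrow> int" where
  "ext_fin m n \<omega> x = (if x < m then 0 else if x > n then 1 else \<omega> x)"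

definition hN :: "nat \<Rightarrow> int \<Rightarrow> (int \<Rightarrow> int) \<Rightarrow> int \<Rightarrow> int" where
  "hN N k \<sigma> = height (ext_fin 1 (int N) (\<lambda>x. if \<sigma> x \<le> k then 1 else 0))"

definition hZ :: "int \<Rightarrow> (int \<Rightarrow> int) \<Rightarrow> int \<Rightarrow> int" where
  "hZ k \<sigma> = height (\<lambda>x. if \<sigma> x \<le> k then 1 else 0)"

end

theory Submission
  imports Defs
begin

text \<open>A ring of a clock at the
  edge \<open>(e, e + 1)\<close> sorts the two 0/1 values of every projection at \<open>e, e + 1\<close> in the same
  direction, and a common sort preserves the pointwise order of heights. So the order propagates
  ring by ring once it holds at time \<open>0\<close>, where it holds because the identity of \<open>[N]\<close> has the
  lowest height among all permutations of \<open>[N]\<close> and lies below the height of the identity of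
  \<open>\<int>\<close>. The infinite system also moves at the edges \<open>(0, 1)\<close> and \<open>(N, N + 1)\<close>, which the finite
  one lacks; there the finite height is extremal and the gap is at least \<open>2\<close>, so such a move cannot
  break the order.

  Almost surely no two clocks ring at the same time, and for every \<open>T\<close> there are sites
  arbitrarily far to the left and to the right whose clocks stay silent up to \<open>T\<close>. Between two
  such sites the infinite system is a finite one, so up to time \<open>T\<close> every comparison involves only
  finitely many rings.\<close>

section \<open>Height functions\<close>

text \<open>The configurations for which \<^const>\<open>height\<close> is meaningful.\<close>

definition admissible :: "(int \<Rightarrow> int) \<Rightarrow> bool" where
  "admissible \<omega> \<longleftrightarrow> (\<forall>z. \<omega> z = 0 \<or> \<omega> z = 1) \<and> (\<exists>y c. \<forall>z\<le>y. \<omega> z = c)"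

lemma height_base_shift:
  fixes \<omega> :: "int \<Rightarrow> int"
  assumes const: "\<forall>z\<le>y. \<omega> z = c" and val: "c = 0 \<or> c = 1" and "y' \<le> y" "y \<le> x"
  shows "(if c = 0 then y' else - y') + (\<Sum>z\<in>{y'<..x}. 1 - 2 * \<omega> z) =
         (if c = 0 then y else - y) + (\<Sum>z\<in>{y<..x}. 1 - 2 * \<omega> z)"
proof -
  have "{y'<..x} = {y'<..y} \<union> {y<..x}" using \<open>y' \<le> y\<close> \<open>y \<le> x\<close> by auto
  then have "(\<Sum>z\<in>{y'<..x}. 1 - 2 * \<omega> z) = (\<Sum>z\<in>{y'<..y}. 1 - 2 * \<omega> z) + (\<Sum>z\<in>{y<..x}. 1 - 2 * \<omega> z)"
    by (simp add: sum.union_disjoint ivl_disj_int_two(4))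
  moreover have "(\<Sum>z\<in>{y'<..y}. 1 - 2 * \<omega> z) = (y - y') * (1 - 2 * c)"
    using const \<open>y' \<le> y\<close> by simp
  ultimately show ?thesis using val by (auto simp: algebra_simps)
qed

lemma height_eq_sum:
  assumes const: "\<forall>z\<le>y. \<omega> z = c" and val: "c = 0 \<or> c = 1" and "y \<le> x"
  shows "height \<omega> x = (if c = 0 then y else - y) + (\<Sum>z\<in>{y<..x}. 1 - 2 * \<omega> z)"
  unfolding height_def
proof (rule the_equality)
  show "\<exists>y'\<le>x. (\<forall>z\<le>y'. \<omega> z = \<omega> y') \<and> (if c = 0 then y else - y) + (\<Sum>z\<in>{y<..x}. 1 - 2 * \<omega> z) =
      (if \<omega> y' = 0 then y' else - y') + (\<Sum>z\<in>{y'<..x}. 1 - 2 * \<omega> z)"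
    using assms by (intro exI[of _ y]) auto
next
  fix v assume "\<exists>y'\<le>x. (\<forall>z\<le>y'. \<omega> z = \<omega> y') \<and> v = (if \<omega> y' = 0 then y' else - y') + (\<Sum>z\<in>{y'<..x}. 1 - 2 * \<omega> z)"
  then obtain y' where y': "y' \<le> x" "\<forall>z\<le>y'. \<omega> z = \<omega> y'"
    and v: "v = (if \<omega> y' = 0 then y' else - y') + (\<Sum>z\<in>{y'<..x}. 1 - 2 * \<omega> z)" by blast
  have "\<omega> y' = c" using const y'(2) by (metis min.cobounded1 min.cobounded2)
  then have const': "\<forall>z\<le>y'. \<omega> z = c" using y'(2) by metis
  define m where "m = min y y'"
  show "v = (if c = 0 then y else - y) + (\<Sum>z\<in>{y<..x}. 1 - 2 * \<omega> z)"
    using v y'(1) \<open>y \<le> x\<close> \<open>\<omega> y' = c\<close> height_base_shift[OF const val, of m x]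
      height_base_shift[OF const' val, of m x] by (simp add: m_def)
qed

lemma height_const_below:
  assumes const: "\<forall>z\<le>y. \<omega> z = c" and val: "c = 0 \<or> c = 1" and "x \<le> y"
  shows "height \<omega> x = (if c = 0 then x else - x)"
  using height_eq_sum[of x \<omega> c x] assms by simp

lemma height_diff:
  assumes "admissible \<omega>"
  shows "height \<omega> x = height \<omega> (x - 1) + 1 - 2 * \<omega> x"
proof -
  obtain y0 c where y0: "\<forall>z\<le>y0. \<omega> z = c" and val: "\<forall>z. \<omega> z = 0 \<or> \<omega> z = 1"
    using assms by (auto simp: admissible_def)
  define y where "y = min y0 (x - 1)"
  have const: "\<forall>z\<le>y. \<omega> z = c" and c: "c = 0 \<or> c = 1" using y0 val[rule_format, of y] by (auto simp: y_def)
  have "{y<..x} = insert x {y<..x - 1}" by (auto simp: y_def)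
  then show ?thesis using height_eq_sum[OF const c, of x] height_eq_sum[OF const c, of "x - 1"]
    by (simp add: y_def)
qed

lemma height_eq_if_eq_below:
  assumes "admissible \<omega>1" "admissible \<omega>2" and eq: "\<forall>z\<le>x. \<omega>1 z = \<omega>2 z"
  shows "height \<omega>1 x = height \<omega>2 x"
proof -
  obtain y1 y2 c1 c2 where y1: "\<forall>z\<le>y1. \<omega>1 z = c1" and y2: "\<forall>z\<le>y2. \<omega>2 z = c2"
    and val: "\<forall>z. \<omega>1 z = 0 \<or> \<omega>1 z = 1"
    using assms(1,2) by (auto simp: admissible_def)
  define y where "y = min (min y1 y2) x"
  have const: "\<forall>z\<le>y. \<omega>1 z = c1" "\<forall>z\<le>y. \<omega>2 z = c1"
    using y1 y2 eq by (auto simp: y_def)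
  moreover have "c1 = 0 \<or> c1 = 1" using y1 val by (metis order_refl)
  moreover have "(\<Sum>z\<in>{y<..x}. 1 - 2 * \<omega>1 z) = (\<Sum>z\<in>{y<..x}. 1 - 2 * \<omega>2 z)"
    using eq by (intro sum.cong) auto
  moreover have "y \<le> x" by (simp add: y_def)
  ultimately show ?thesis using height_eq_sum[of y \<omega>1 c1 x] height_eq_sum[of y \<omega>2 c1 x] by metis
qed

text \<open>The pair at \<open>e, e + 1\<close> sorted increasingly if \<open>up\<close>, decreasingly otherwise; an increasing
  sort puts a \<open>0\<close> at \<open>e\<close> whenever possible and so can only raise the height at \<open>e\<close>.\<close>

definition sort_adj :: "int \<Rightarrow> bool \<Rightarrow> (int \<Rightarrow> int) \<Rightarrow> int \<Rightarrow> int" where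
  "sort_adj e up \<omega> z =
     (if z = e then (if up then min (\<omega> e) (\<omega> (e + 1)) else max (\<omega> e) (\<omega> (e + 1)))
      else if z = e + 1 then (if up then max (\<omega> e) (\<omega> (e + 1)) else min (\<omega> e) (\<omega> (e + 1)))
      else \<omega> z)"

lemma admissible_sort_adj:
  assumes "admissible \<omega>"
  shows "admissible (sort_adj e up \<omega>)"
proof -
  obtain y c where y: "\<forall>z\<le>y. \<omega> z = c" and val: "\<forall>z. \<omega> z = 0 \<or> \<omega> z = 1"
    using assms by (auto simp: admissible_def)
  have "\<forall>z\<le>min y (e - 1). sort_adj e up \<omega> z = c"
    using y by (auto simp: sort_adj_def)
  moreover have "\<forall>z. sort_adj e up \<omega> z = 0 \<or> sort_adj e up \<omega> z = 1"
    using val by (auto simp: sort_adj_def min_def max_def)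
  ultimately show ?thesis unfolding admissible_def by blast
qed

lemma height_sort_adj:
  assumes adm: "admissible \<omega>"
  shows "height (sort_adj e up \<omega>) x =
    (if x = e then height \<omega> (e - 1) + 1 - 2 * sort_adj e up \<omega> e else height \<omega> x)"
proof -
  let ?\<omega>' = "sort_adj e up \<omega>"
  have adm': "admissible ?\<omega>'" using adm by (rule admissible_sort_adj)
  have below: "height ?\<omega>' x = height \<omega> x" if "x < e" for x
    using that by (intro height_eq_if_eq_below[OF adm' adm]) (auto simp: sort_adj_def)
  have at_e: "height ?\<omega>' e = height \<omega> (e - 1) + 1 - 2 * ?\<omega>' e"
    using height_diff[OF adm', of e] below[of "e - 1"] by simp
  have "?\<omega>' e + ?\<omega>' (e + 1) = \<omega> e + \<omega> (e + 1)" by (auto simp: sort_adj_def)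
  then have at_e1: "height ?\<omega>' (e + 1) = height \<omega> (e + 1)"
    using height_diff[OF adm', of "e + 1"] height_diff[OF adm, of "e + 1"] height_diff[OF adm, of e] at_e
    by simp
  have above: "height ?\<omega>' x = height \<omega> x" if "e + 1 \<le> x" for x
    using that
  proof (induction x rule: int_ge_induct)
    case base
    show ?case by (rule at_e1)
  next
    case (step i)
    have "?\<omega>' (i + 1) = \<omega> (i + 1)" using step.hyps by (auto simp: sort_adj_def)
    then show ?case using height_diff[OF adm', of "i + 1"] height_diff[OF adm, of "i + 1"] step.IH by simp
  qed
  show ?thesis using below at_e above by (cases x e rule: linorder_cases) auto
qed

lemma height_sort_adj_mono:
  assumes adm: "admissible \<omega>1" "admissible \<omega>2" and le: "\<forall>x. height \<omega>1 x \<le> height \<omega>2 x"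
  shows "height (sort_adj e up \<omega>1) x \<le> height (sort_adj e up \<omega>2) x"
proof (cases "x = e")
  case True
  have val: "\<omega>1 z = 0 \<or> \<omega>1 z = 1" "\<omega>2 z = 0 \<or> \<omega>2 z = 1" for z
    using adm by (auto simp: admissible_def)
  have "height \<omega>1 (e + 1) = height \<omega>1 (e - 1) + 2 - 2 * \<omega>1 e - 2 * \<omega>1 (e + 1)"
       "height \<omega>2 (e + 1) = height \<omega>2 (e - 1) + 2 - 2 * \<omega>2 e - 2 * \<omega>2 (e + 1)"
    using height_diff[OF adm(1), of "e + 1"] height_diff[OF adm(1), of e]
      height_diff[OF adm(2), of "e + 1"] height_diff[OF adm(2), of e] by simp_all
  moreover have "height \<omega>1 (e - 1) \<le> height \<omega>2 (e - 1)" "height \<omega>1 (e + 1) \<le> height \<omega>2 (e + 1)"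
    using le by simp_all
  ultimately show ?thesis
    using True val[of e] val[of "e + 1"] height_sort_adj[OF adm(1), of e up e] height_sort_adj[OF adm(2), of e up e]
    by (auto simp: sort_adj_def)
qed (simp add: height_sort_adj[OF adm(1)] height_sort_adj[OF adm(2)] le)

text \<open>Only \<open>\<omega>2\<close> moves. This can lower its height only at \<open>e\<close>, by \<open>2\<close>, and only by a decreasing
  sort of a pair \<open>0 1\<close>; each disjunct of \<open>cond\<close> excludes that or leaves room for it.\<close>

lemma height_le_sort_adj:
  assumes adm: "admissible \<omega>1" "admissible \<omega>2" and le: "\<forall>x. height \<omega>1 x \<le> height \<omega>2 x"
    and cond: "up \<or> \<omega>1 e = 1 \<or> \<omega>1 (e + 1) = 0 \<or> height \<omega>1 (e - 1) + 2 \<le> height \<omega>2 (e - 1)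
       \<or> height \<omega>1 (e + 1) + 2 \<le> height \<omega>2 (e + 1)"
  shows "height \<omega>1 x \<le> height (sort_adj e up \<omega>2) x"
proof (cases "x = e")
  case True
  have val: "\<omega>1 z = 0 \<or> \<omega>1 z = 1" "\<omega>2 z = 0 \<or> \<omega>2 z = 1" for z
    using adm by (auto simp: admissible_def)
  have "height \<omega>1 e = height \<omega>1 (e - 1) + 1 - 2 * \<omega>1 e"
       "height \<omega>1 (e + 1) = height \<omega>1 e + 1 - 2 * \<omega>1 (e + 1)"
       "height \<omega>2 e = height \<omega>2 (e - 1) + 1 - 2 * \<omega>2 e"
       "height \<omega>2 (e + 1) = height \<omega>2 e + 1 - 2 * \<omega>2 (e + 1)"
    using height_diff[OF adm(1), of "e + 1"] height_diff[OF adm(1), of e]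
      height_diff[OF adm(2), of "e + 1"] height_diff[OF adm(2), of e] by simp_all
  moreover have "height \<omega>1 (e - 1) \<le> height \<omega>2 (e - 1)" "height \<omega>1 e \<le> height \<omega>2 e"
    "height \<omega>1 (e + 1) \<le> height \<omega>2 (e + 1)"
    using le by simp_all
  ultimately show ?thesis
    using True cond val[of e] val[of "e + 1"] height_sort_adj[OF adm(2), of e up e]
    by (auto simp: sort_adj_def)
qed (simp add: height_sort_adj[OF adm(2)] le)

section \<open>Projections and their heights\<close>

definition proj :: "int \<Rightarrow> (int \<Rightarrow> int) \<Rightarrow> int \<Rightarrow> int" where
  "proj k \<sigma> = (\<lambda>x. if \<sigma> x \<le> k then 1 else 0)"

lemma hN_eq_height: "hN N k \<sigma> = height (ext_fin 1 (int N) (proj k \<sigma>))"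
  unfolding hN_def proj_def ..

lemma hZ_eq_height: "hZ k \<sigma> = height (proj k \<sigma>)"
  unfolding hZ_def proj_def ..

lemma admissible_ext_fin_proj: "admissible (ext_fin 1 n (proj k \<sigma>))"
  unfolding admissible_def by (auto simp: ext_fin_def proj_def intro!: exI[of _ 0])

lemma admissible_proj:
  assumes "\<forall>z\<le>a. v z = z"
  shows "admissible (proj k v)"
  unfolding admissible_def
proof (intro conjI exI)
  show "\<forall>z\<le>min a k. proj k v z = 1" using assms by (auto simp: proj_def)
qed (auto simp: proj_def)

lemma card_sublevel_bij_betw:
  assumes "bij_betw u A A"
  shows "card {z\<in>A. u z \<le> k} = card {z\<in>A. z \<le> (k::int)}"
proof -
  have "bij_betw u {z\<in>A. u z \<le> k} {z\<in>A. z \<le> k}"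
    using assms unfolding bij_betw_def inj_on_def by auto
  then show ?thesis by (rule bij_betw_same_card)
qed

lemma sum_indicator_eq_card:
  "finite A \<Longrightarrow> (\<Sum>z\<in>A. if P z then 1 else 0) = int (card {z\<in>A. P z})"
  using sum.inter_filter[of A "\<lambda>_. 1::int" P] by simp

lemma sum_one_minus_twice:
  fixes f :: "'a \<Rightarrow> int"
  shows "(\<Sum>z\<in>A. 1 - 2 * f z) = int (card A) - 2 * sum f A"
  by (simp add: sum_subtractf sum_distrib_left)

lemma hN_nonpos: "x \<le> 0 \<Longrightarrow> hN N k u x = x"
  unfolding hN_eq_height by (subst height_const_below[of 0 _ 0]) (auto simp: ext_fin_def)

lemma hN_eq_card:
  assumes "0 \<le> x" "x \<le> int N"
  shows "hN N k u x = x - 2 * int (card {z\<in>{1..x}. u z \<le> k})"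
proof -
  let ?\<omega> = "ext_fin 1 (int N) (proj k u)"
  have "hN N k u x = (\<Sum>z\<in>{0<..x}. 1 - 2 * ?\<omega> z)"
    unfolding hN_eq_height using assms by (subst height_eq_sum[of 0 _ 0]) (auto simp: ext_fin_def)
  also have "{0<..x} = {1..x}" by auto
  also have "(\<Sum>z\<in>{1..x}. 1 - 2 * ?\<omega> z) = (\<Sum>z\<in>{1..x}. 1 - 2 * (if u z \<le> k then 1 else 0))"
    using assms by (intro sum.cong) (auto simp: ext_fin_def proj_def)
  finally show ?thesis
    using assms by (simp only: sum_one_minus_twice sum_indicator_eq_card finite_atLeastAtMost_int) simp
qed

lemma card_sublevel_perm:
  assumes "bij_betw u {1..int N} {1..int N}" "0 \<le> k" "k \<le> int N"
  shows "card {z\<in>{1..int N}. u z \<le> k} = nat k"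
proof -
  have "{z\<in>{1..int N}. z \<le> k} = {1..k}" using assms by auto
  then show ?thesis using card_sublevel_bij_betw[OF assms(1), of k] by simp
qed

lemma hN_ge_N:
  assumes "bij_betw u {1..int N} {1..int N}" "0 \<le> k" "k \<le> int N" "int N \<le> x"
  shows "hN N k u x = 2 * int N - 2 * k - x"
  using assms(4)
proof (induction x rule: int_ge_induct)
  case base
  show ?case using hN_eq_card[of "int N" N k u] card_sublevel_perm[OF assms(1-3)] assms(2) by simp
next
  case (step i)
  then show ?case
    using height_diff[OF admissible_ext_fin_proj, of "int N" k u "i + 1"] unfolding hN_eq_height
    by (simp add: ext_fin_def)
qed

lemma hN_id_le:
  assumes "bij_betw u {1..int N} {1..int N}" "0 \<le> k" "k \<le> int N"
  shows "hN N k id x \<le> hN N k u x"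
proof -
  consider "x \<le> 0" | "0 \<le> x" "x \<le> int N" | "int N \<le> x" by linarith
  then show ?thesis
  proof cases
    case 2
    have "{z\<in>{1..x}. id z \<le> k} = {1..min x k}" by auto
    then have "card {z\<in>{1..x}. id z \<le> k} = nat (min x k)" by simp
    moreover have "card {z\<in>{1..x}. u z \<le> k} \<le> card {1..x}" by (rule card_mono) auto
    moreover have "card {z\<in>{1..x}. u z \<le> k} \<le> card {z\<in>{1..int N}. u z \<le> k}"
      by (rule card_mono) (use 2 in \<open>auto intro: finite_subset[of _ "{1..int N}"]\<close>)
    ultimately show ?thesis
      using 2 assms(2) hN_eq_card[of x N k id] hN_eq_card[of x N k u] card_sublevel_perm[OF assms]
      by (simp add: le_nat_iff)
  next
    case 3
    then show ?thesis using hN_ge_N[OF assms 3] hN_ge_N[OF _ assms(2,3) 3, of id] by simp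
  qed (simp add: hN_nonpos)
qed

lemma hN_id_le_max:
  assumes "0 \<le> k" "k \<le> int N"
  shows "hN N k id x \<le> max (- x) (x - 2 * k)"
proof -
  consider "x \<le> 0" | "0 \<le> x" "x \<le> int N" | "int N \<le> x" by linarith
  then show ?thesis
  proof cases
    case 2
    have "{z\<in>{1..x}. id z \<le> k} = {1..min x k}" by auto
    then show ?thesis using 2 hN_eq_card[of x N k id] assms by (simp add: max_def min_def)
  next
    case 3
    then show ?thesis using hN_ge_N[OF _ assms 3, of id] by simp
  qed (simp add: hN_nonpos)
qed

lemma hZ_ge_max:
  assumes bij: "bij_betw v {a<..b} {a<..b}" and outside: "\<forall>z. z \<notin> {a<..b} \<longrightarrow> v z = z"
    and k: "a \<le> k" "k \<le> b"
  shows "max (- x) (x - 2 * k) \<le> hZ k v x"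
proof (cases "x \<le> a")
  case True
  have "\<forall>z\<le>a. proj k v z = 1" using outside k by (auto simp: proj_def)
  then show ?thesis using True k unfolding hZ_eq_height by (subst height_const_below[of a _ 1]) auto
next
  case False
  let ?C = "{z\<in>{a<..x}. v z \<le> k}"
  have "\<forall>z\<le>a. proj k v z = 1" using outside k by (auto simp: proj_def)
  then have "hZ k v x = - a + (\<Sum>z\<in>{a<..x}. 1 - 2 * proj k v z)"
    using False unfolding hZ_eq_height by (subst height_eq_sum[of a _ 1]) auto
  also have "\<dots> = x - 2 * a - 2 * int (card ?C)"
    using False by (simp only: sum_one_minus_twice proj_def sum_indicator_eq_card finite_greaterThanAtMost_int) simp
  finally have h: "hZ k v x = x - 2 * a - 2 * int (card ?C)" .
  have "card ?C \<le> card {a<..x}" by (rule card_mono) auto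
  moreover have "card ?C \<le> card {z\<in>{a<..b}. v z \<le> k}"
  proof (rule card_mono)
    show "?C \<subseteq> {z\<in>{a<..b}. v z \<le> k}" using outside k by force
  qed (auto intro: finite_subset[of _ "{a<..b}"])
  moreover have "{z\<in>{a<..b}. z \<le> k} = {a<..k}" using k by auto
  ultimately show ?thesis using h False k card_sublevel_bij_betw[OF bij, of k] by (simp add: le_nat_iff)
qed

section \<open>Clock steps\<close>

text \<open>A ring at the edge \<open>(e, e + 1)\<close> of the rate-\<open>1\<close> clock (\<open>up\<close>) or of the rate-\<open>q\<close> clock;
  it sorts the projections increasingly resp. decreasingly (\<open>proj_clock_step\<close>).\<close>

definition clock_step :: "int set \<Rightarrow> int \<Rightarrow> bool \<Rightarrow> (int \<Rightarrow> int) \<Rightarrow> int \<Rightarrow> int" where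
  "clock_step F e up \<tau> =
     (if e \<in> F \<and> e + 1 \<in> F \<and> (if up then \<tau> e < \<tau> (e + 1) else \<tau> (e + 1) < \<tau> e)
      then Fun.swap e (e + 1) \<tau> else \<tau>)"

lemma clock_step_trivial: "\<not> (e \<in> F \<and> e + 1 \<in> F) \<Longrightarrow> clock_step F e up \<tau> = \<tau>"
  by (auto simp: clock_step_def)

lemma clock_step_outside: "z \<notin> F \<Longrightarrow> clock_step F e up \<tau> z = \<tau> z"
  by (auto simp: clock_step_def Transposition.transpose_def)

lemma bij_betw_clock_step: "bij_betw \<tau> F F \<Longrightarrow> bij_betw (clock_step F e up \<tau>) F F"
  by (simp add: clock_step_def bij_betw_swap_iff)

lemma proj_clock_step:
  assumes "e \<in> F" "e + 1 \<in> F" "\<tau> e \<noteq> \<tau> (e + 1)"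
  shows "proj k (clock_step F e up \<tau>) = sort_adj e up (proj k \<tau>)"
  using assms by (auto simp: clock_step_def proj_def sort_adj_def Transposition.transpose_def fun_eq_iff)

lemma ext_fin_sort_adj:
  assumes "m \<le> e" "e + 1 \<le> n"
  shows "ext_fin m n (sort_adj e up \<omega>) = sort_adj e up (ext_fin m n \<omega>)"
  using assms by (auto simp: ext_fin_def sort_adj_def fun_eq_iff)

lemma bij_betw_adj_neq:
  fixes e :: int
  assumes "bij_betw u F F" "e \<in> F" "e + 1 \<in> F"
  shows "u e \<noteq> u (e + 1)"
proof
  assume "u e = u (e + 1)"
  then have "e = e + 1" using inj_onD[OF bij_betw_imp_inj_on[OF assms(1)]] assms(2,3) by blast
  then show False by simp
qed

lemma hN_clock_step_mono:
  assumes u: "bij_betw u {1..int N} {1..int N}" and v: "bij_betw v {1..int N} {1..int N}"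
    and le: "\<forall>x. hN N k u x \<le> hN N k v x"
  shows "hN N k (clock_step {1..int N} e up u) x \<le> hN N k (clock_step {1..int N} e up v) x"
proof (cases "1 \<le> e \<and> e + 1 \<le> int N")
  case True
  then have "ext_fin 1 (int N) (proj k (clock_step {1..int N} e up w)) =
      sort_adj e up (ext_fin 1 (int N) (proj k w))" if "bij_betw w {1..int N} {1..int N}" for w
    using that by (simp add: proj_clock_step bij_betw_adj_neq ext_fin_sort_adj)
  moreover have "\<forall>x. height (ext_fin 1 (int N) (proj k u)) x \<le> height (ext_fin 1 (int N) (proj k v)) x"
    using le by (simp add: hN_eq_height)
  ultimately show ?thesis
    using u v unfolding hN_eq_height by (simp add: height_sort_adj_mono admissible_ext_fin_proj)
qed (use le in \<open>simp add: clock_step_trivial\<close>)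

text \<open>The edges \<open>(0, 1)\<close> and \<open>(N, N + 1)\<close> exist only for the infinite system. There the
  finite height is extremal (\<open>x\<close> left of \<open>1\<close>, \<open>2N - 2k - x\<close> right of \<open>N\<close>) while the infinite
  one is at least \<open>max (- x) (x - 2k)\<close>, a gap of \<open>2\<close> that no single move can close.\<close>

lemma hN_le_hZ_boundary_step:
  assumes u: "bij_betw u {1..int N} {1..int N}"
    and v: "bij_betw v {a<..b} {a<..b}" "\<forall>z. z \<notin> {a<..b} \<longrightarrow> v z = z"
    and ab: "a \<le> 0" "int N \<le> b" and k: "0 \<le> k" "k \<le> int N"
    and le: "\<forall>x. hN N k u x \<le> hZ k v x"
    and e: "a < e" "e + 1 \<le> b" "e < 1 \<or> int N < e + 1"
  shows "hN N k u x \<le> hZ k (clock_step {a<..b} e up v) x"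
proof -
  let ?\<omega>1 = "ext_fin 1 (int N) (proj k u)" and ?\<omega>2 = "proj k v"
  have adm: "admissible ?\<omega>1" "admissible ?\<omega>2"
    using v(2) by (auto intro: admissible_ext_fin_proj admissible_proj[of a])
  have le': "\<forall>x. height ?\<omega>1 x \<le> height ?\<omega>2 x" using le by (simp add: hN_eq_height hZ_eq_height)
  consider "e < 0" | "e = 0" | "int N < e" | "e = int N" using e by linarith
  then have "up \<or> ?\<omega>1 e = 1 \<or> ?\<omega>1 (e + 1) = 0 \<or> height ?\<omega>1 (e - 1) + 2 \<le> height ?\<omega>2 (e - 1)
      \<or> height ?\<omega>1 (e + 1) + 2 \<le> height ?\<omega>2 (e + 1)"
  proof cases
    case 2
    have "height ?\<omega>1 (e - 1) = - 1" using 2 hN_nonpos[of "-1" N k u] by (simp add: hN_eq_height)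
    moreover have "1 \<le> height ?\<omega>2 (e - 1)"
      using 2 hZ_ge_max[OF v, of k "- 1"] ab k by (simp add: hZ_eq_height)
    ultimately show ?thesis by simp
  next
    case 4
    have "height ?\<omega>1 (e + 1) = int N - 2 * k - 1"
      using 4 hN_ge_N[OF u k, of "e + 1"] by (simp add: hN_eq_height)
    moreover have "int N + 1 - 2 * k \<le> height ?\<omega>2 (e + 1)"
      using 4 hZ_ge_max[OF v, of k "e + 1"] ab k by (simp add: hZ_eq_height)
    ultimately show ?thesis by simp
  qed (simp_all add: ext_fin_def)
  then have "height ?\<omega>1 x \<le> height (sort_adj e up ?\<omega>2) x"
    by (rule height_le_sort_adj[OF adm le'])
  moreover have "proj k (clock_step {a<..b} e up v) = sort_adj e up ?\<omega>2"
    using e by (simp add: proj_clock_step bij_betw_adj_neq[OF v(1)])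
  ultimately show ?thesis by (simp add: hN_eq_height hZ_eq_height)
qed

lemma hN_hZ_clock_step_mono:
  assumes u: "bij_betw u {1..int N} {1..int N}"
    and v: "bij_betw v {a<..b} {a<..b}" "\<forall>z. z \<notin> {a<..b} \<longrightarrow> v z = z"
    and ab: "a \<le> 0" "int N \<le> b" and k: "0 \<le> k" "k \<le> int N"
    and le: "\<forall>x. hN N k u x \<le> hZ k v x"
  shows "hN N k (clock_step {1..int N} e up u) x \<le> hZ k (clock_step {a<..b} e up v) x"
proof -
  consider (inner) "1 \<le> e" "e + 1 \<le> int N" | (none) "\<not> (a < e \<and> e + 1 \<le> b)"
    | (boundary) "a < e" "e + 1 \<le> b" "e < 1 \<or> int N < e + 1" by linarith
  then show ?thesis
  proof cases
    case inner
    let ?\<omega>1 = "ext_fin 1 (int N) (proj k u)" and ?\<omega>2 = "proj k v"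
    have adm: "admissible ?\<omega>1" "admissible ?\<omega>2"
      using v(2) by (auto intro: admissible_ext_fin_proj admissible_proj[of a])
    have le': "\<forall>x. height ?\<omega>1 x \<le> height ?\<omega>2 x" using le by (simp add: hN_eq_height hZ_eq_height)
    have "proj k (clock_step {1..int N} e up u) = sort_adj e up (proj k u)"
      using inner by (simp add: proj_clock_step bij_betw_adj_neq[OF u])
    moreover have "proj k (clock_step {a<..b} e up v) = sort_adj e up ?\<omega>2"
      using inner ab by (simp add: proj_clock_step bij_betw_adj_neq[OF v(1)])
    moreover have "ext_fin 1 (int N) (sort_adj e up (proj k u)) = sort_adj e up ?\<omega>1"
      using inner by (intro ext_fin_sort_adj) auto
    moreover have "height (sort_adj e up ?\<omega>1) x \<le> height (sort_adj e up ?\<omega>2) x"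
      by (rule height_sort_adj_mono[OF adm le'])
    ultimately show ?thesis by (simp add: hN_eq_height hZ_eq_height)
  next
    case none
    then have "clock_step {1..int N} e up u = u" "clock_step {a<..b} e up v = v"
      using ab by (auto intro: clock_step_trivial)
    then show ?thesis using le by simp
  next
    case boundary
    then have "clock_step {1..int N} e up u = u" by (auto intro: clock_step_trivial)
    then show ?thesis using hN_le_hZ_boundary_step[OF u v ab k le boundary] by simp
  qed
qed

section \<open>Trajectories on finite windows\<close>

definition restr_id :: "int set \<Rightarrow> (int \<Rightarrow> int) \<Rightarrow> int \<Rightarrow> int" where
  "restr_id F \<sigma> = (\<lambda>z. if z \<in> F then \<sigma> z else z)"

lemma left_limit_eqI:
  assumes "eventually (\<lambda>s. \<sigma> s x = v) (at_left t)"
  shows "left_limit \<sigma> t x = v"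
proof -
  have iff: "(\<exists>\<epsilon>>0. \<forall>s. t - \<epsilon> < s \<and> s < t \<longrightarrow> \<sigma> s x = w) \<longleftrightarrow> eventually (\<lambda>s. \<sigma> s x = w) (at_left t)"
    for w
  proof
    assume "\<exists>\<epsilon>>0. \<forall>s. t - \<epsilon> < s \<and> s < t \<longrightarrow> \<sigma> s x = w"
    then obtain \<epsilon> where "\<epsilon> > 0" "\<forall>s. t - \<epsilon> < s \<and> s < t \<longrightarrow> \<sigma> s x = w" by blast
    then show "eventually (\<lambda>s. \<sigma> s x = w) (at_left t)"
      unfolding eventually_at_left_field by (intro exI[of _ "t - \<epsilon>"]) auto
  next
    assume "eventually (\<lambda>s. \<sigma> s x = w) (at_left t)"
    then obtain b where "b < t" "\<forall>s>b. s < t \<longrightarrow> \<sigma> s x = w"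
      unfolding eventually_at_left_field by blast
    then show "\<exists>\<epsilon>>0. \<forall>s. t - \<epsilon> < s \<and> s < t \<longrightarrow> \<sigma> s x = w"
      by (intro exI[of _ "t - b"]) auto
  qed
  show ?thesis
    unfolding left_limit_def iff
  proof (rule the_equality)
    fix w assume "eventually (\<lambda>s. \<sigma> s x = w) (at_left t)"
    with assms have "eventually (\<lambda>s. w = v) (at_left t)" by eventually_elim simp
    then show "w = v" by simp
  qed fact
qed

lemma drivenD:
  assumes "driven D P1 Pq \<sigma>"
  shows "\<forall>t\<ge>0. \<forall>x\<in>D. \<exists>\<epsilon>>0. \<forall>s. t \<le> s \<and> s < t + \<epsilon> \<longrightarrow> \<sigma> s x = \<sigma> t x"
    and "\<forall>t>0. \<forall>x\<in>D. \<exists>v. \<exists>\<epsilon>>0. \<forall>s. t - \<epsilon> < s \<and> s < t \<longrightarrow> \<sigma> s x = v"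
    and "\<forall>t>0. \<forall>x\<in>D. \<sigma> t x = update D P1 Pq (left_limit \<sigma> t) t x"
  using assms unfolding driven_def by simp_all

lemma driven_right_const:
  assumes "driven D P1 Pq \<sigma>" "0 \<le> t" "x \<in> D"
  shows "eventually (\<lambda>s. \<sigma> s x = \<sigma> t x) (at_right t)"
proof -
  obtain \<epsilon> where \<epsilon>: "\<epsilon> > 0" "\<forall>s. t \<le> s \<and> s < t + \<epsilon> \<longrightarrow> \<sigma> s x = \<sigma> t x"
    using drivenD(1)[OF assms(1)] assms(2,3) by blast
  then have "\<forall>s>t. s < t + \<epsilon> \<longrightarrow> \<sigma> s x = \<sigma> t x" using less_imp_le by blast
  then show ?thesis unfolding eventually_at_right_field using \<epsilon>(1) by (intro exI[of _ "t + \<epsilon>"]) simp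
qed

lemma driven_left_limit:
  assumes "driven D P1 Pq \<sigma>" "0 < t" "x \<in> D"
  shows "eventually (\<lambda>s. \<sigma> s x = left_limit \<sigma> t x) (at_left t)"
proof -
  obtain v \<epsilon> where "\<epsilon> > 0" "\<forall>s. t - \<epsilon> < s \<and> s < t \<longrightarrow> \<sigma> s x = v"
    using drivenD(2)[OF assms(1)] assms(2,3) by blast
  then have "eventually (\<lambda>s. \<sigma> s x = v) (at_left t)"
    unfolding eventually_at_left_field by (intro exI[of _ "t - \<epsilon>"]) auto
  then show ?thesis using left_limit_eqI by metis
qed

lemma restr_id_update:
  assumes "F \<subseteq> D" and sealed: "\<forall>x\<in>active D P1 Pq \<tau> t. x \<in> F \<longleftrightarrow> x + 1 \<in> F"
  shows "restr_id F (update D P1 Pq \<tau> t) = update F P1 Pq (restr_id F \<tau>) t"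
proof
  fix z
  let ?A = "active D P1 Pq \<tau> t" and ?B = "active F P1 Pq (restr_id F \<tau>) t"
  have B: "x \<in> ?B \<longleftrightarrow> x \<in> ?A \<and> x \<in> F" for x
    using assms by (auto simp: active_def restr_id_def)
  have B_edge: "x \<in> F" "x + 1 \<in> F" if "x \<in> ?B" for x
    using that by (auto simp: active_def)
  show "restr_id F (update D P1 Pq \<tau> t) z = update F P1 Pq (restr_id F \<tau>) t z"
  proof (cases "z \<in> F")
    case True
    have "z \<in> ?A \<longleftrightarrow> z \<in> ?B" "z - 1 \<in> ?A \<longleftrightarrow> z - 1 \<in> ?B"
      using B sealed True by force+
    then show ?thesis
      using True B_edge[of z] B_edge[of "z - 1"] by (simp add: update_def restr_id_def)
  next
    case False
    then have "z \<notin> ?B" "z - 1 \<notin> ?B" using B_edge[of z] B_edge[of "z - 1"] by auto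
    then show ?thesis using False by (simp add: update_def restr_id_def)
  qed
qed

text \<open>Unlike \<^const>\<open>driven\<close>, this treats the configuration on the window as a whole, which
  makes sense for finite windows (\<open>driven_window\<close>).\<close>

definition window_driven ::
    "int set \<Rightarrow> (int \<times> real) set \<Rightarrow> (int \<times> real) set \<Rightarrow> real \<Rightarrow> (real \<Rightarrow> int \<Rightarrow> int) \<Rightarrow> bool" where
  "window_driven F P1 Pq T \<rho> \<longleftrightarrow>
     (\<forall>t. 0 \<le> t \<and> t < T \<longrightarrow> eventually (\<lambda>s. \<rho> s = \<rho> t) (at_right t)) \<and>
     (\<forall>t. 0 < t \<and> t \<le> T \<longrightarrow> (\<exists>\<tau>. eventually (\<lambda>s. \<rho> s = \<tau>) (at_left t) \<and> \<rho> t = update F P1 Pq \<tau> t))"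

lemma window_drivenD:
  assumes "window_driven F P1 Pq T \<rho>"
  shows "0 \<le> t \<Longrightarrow> t < T \<Longrightarrow> eventually (\<lambda>s. \<rho> s = \<rho> t) (at_right t)"
    and "0 < t \<Longrightarrow> t \<le> T \<Longrightarrow>
      \<exists>\<tau>. eventually (\<lambda>s. \<rho> s = \<tau>) (at_left t) \<and> \<rho> t = update F P1 Pq \<tau> t"
  using assms unfolding window_driven_def by simp_all

lemma driven_window:
  assumes dr: "driven D P1 Pq \<sigma>" and F: "finite F" "F \<subseteq> D"
    and sealed: "\<And>t \<tau> x. 0 < t \<Longrightarrow> t \<le> T \<Longrightarrow> x \<in> active D P1 Pq \<tau> t \<Longrightarrow> x \<in> F \<longleftrightarrow> x + 1 \<in> F"
  shows "window_driven F P1 Pq T (\<lambda>t. restr_id F (\<sigma> t))"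
  unfolding window_driven_def
proof (intro conjI allI impI)
  fix t :: real assume "0 \<le> t \<and> t < T"
  then have "eventually (\<lambda>s. \<forall>x\<in>F. \<sigma> s x = \<sigma> t x) (at_right t)"
    using F by (intro eventually_ball_finite ballI driven_right_const[OF dr]) auto
  then show "eventually (\<lambda>s. restr_id F (\<sigma> s) = restr_id F (\<sigma> t)) (at_right t)"
    by eventually_elim (auto simp: restr_id_def fun_eq_iff)
next
  fix t :: real assume t: "0 < t \<and> t \<le> T"
  then have "eventually (\<lambda>s. \<forall>x\<in>F. \<sigma> s x = left_limit \<sigma> t x) (at_left t)"
    using F by (intro eventually_ball_finite ballI driven_left_limit[OF dr]) auto
  then have "eventually (\<lambda>s. restr_id F (\<sigma> s) = restr_id F (left_limit \<sigma> t)) (at_left t)"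
    by eventually_elim (auto simp: restr_id_def fun_eq_iff)
  moreover have "restr_id F (\<sigma> t) = restr_id F (update D P1 Pq (left_limit \<sigma> t) t)"
  proof -
    have "\<forall>x\<in>D. \<sigma> t x = update D P1 Pq (left_limit \<sigma> t) t x"
      using drivenD(3)[OF dr] t by blast
    then show ?thesis using F(2) by (auto simp: restr_id_def fun_eq_iff)
  qed
  moreover have "\<dots> = update F P1 Pq (restr_id F (left_limit \<sigma> t)) t"
    using t F(2) sealed by (intro restr_id_update) auto
  ultimately show "\<exists>\<tau>. eventually (\<lambda>s. restr_id F (\<sigma> s) = \<tau>) (at_left t) \<and>
      restr_id F (\<sigma> t) = update F P1 Pq \<tau> t" by auto
qed

lemma real_induct_right:
  fixes Q :: "real \<Rightarrow> bool"
  assumes zero: "Q 0"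
    and right: "\<And>t. 0 \<le> t \<Longrightarrow> t < T \<Longrightarrow> Q t \<Longrightarrow> eventually Q (at_right t)"
    and left: "\<And>t. 0 < t \<Longrightarrow> t \<le> T \<Longrightarrow> (\<And>s. 0 \<le> s \<Longrightarrow> s < t \<Longrightarrow> Q s) \<Longrightarrow> Q t"
    and t: "0 \<le> t" "t \<le> T"
  shows "Q t"
proof (rule ccontr)
  define S where "S = {t. 0 \<le> t \<and> t \<le> T \<and> \<not> Q t}"
  assume "\<not> Q t"
  then have "t \<in> S" using t by (simp add: S_def)
  then have ne: "S \<noteq> {}" by blast
  have bdd: "bdd_below S" by (rule bdd_belowI[of _ 0]) (simp add: S_def)
  define s where "s = Inf S"
  have s_le: "s \<le> u" if "u \<in> S" for u using cInf_lower[OF that bdd] by (simp add: s_def)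
  have "0 \<le> s" unfolding s_def by (rule cInf_greatest[OF ne]) (simp add: S_def)
  have "s \<le> T" using s_le[OF \<open>t \<in> S\<close>] t(2) by simp
  have before: "Q u" if "0 \<le> u" "u < s" for u
  proof (rule ccontr)
    assume "\<not> Q u"
    then have "u \<in> S" using that \<open>s \<le> T\<close> by (simp add: S_def)
    then show False using s_le[of u] that(2) by simp
  qed
  have "Q s"
  proof (cases "s = 0")
    case True
    then show ?thesis using zero by simp
  next
    case False
    then show ?thesis using left[of s] before \<open>0 \<le> s\<close> \<open>s \<le> T\<close> by simp
  qed
  show False
  proof (cases "s < T")
    case True
    obtain b where "b > s" and after: "\<forall>u>s. u < b \<longrightarrow> Q u"
      using right[OF \<open>0 \<le> s\<close> True \<open>Q s\<close>] unfolding eventually_at_right_field by blast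
    have "b \<le> u" if "u \<in> S" for u
    proof (rule ccontr)
      assume "\<not> b \<le> u"
      moreover have "s \<le> u" "\<not> Q u" using s_le[OF that] that by (simp_all add: S_def)
      ultimately show False using after \<open>Q s\<close> by (cases "u = s") auto
    qed
    then have "b \<le> s" unfolding s_def by (intro cInf_greatest[OF ne])
    then show False using \<open>b > s\<close> by simp
  next
    case False
    then have "t = s" using s_le[OF \<open>t \<in> S\<close>] t \<open>s \<le> T\<close> by simp
    then show False using \<open>\<not> Q t\<close> \<open>Q s\<close> by simp
  qed
qed

definition clocks_simple :: "(int \<times> real) set \<Rightarrow> (int \<times> real) set \<Rightarrow> bool" where
  "clocks_simple P1 Pq \<longleftrightarrow> P1 \<inter> Pq = {} \<and> (\<forall>x y t. (x, t) \<in> P1 \<union> Pq \<longrightarrow> (y, t) \<in> P1 \<union> Pq \<longrightarrow> x = y)"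

lemma update_eq_clock_step:
  assumes simple: "clocks_simple P1 Pq" and ring: "(e, t) \<in> P1 \<union> Pq"
  shows "update F P1 Pq \<tau> t = clock_step F e ((e, t) \<in> P1) \<tau>"
proof -
  let ?A = "active F P1 Pq \<tau> t"
  let ?c = "e \<in> F \<and> e + 1 \<in> F \<and> (if (e, t) \<in> P1 then \<tau> e < \<tau> (e + 1) else \<tau> (e + 1) < \<tau> e)"
  have only_e: "x = e" if "x \<in> ?A" for x
  proof -
    have "(x, t) \<in> P1 \<union> Pq" using that by (auto simp: active_def)
    then show ?thesis using ring simple unfolding clocks_simple_def by blast
  qed
  have e_iff: "e \<in> ?A \<longleftrightarrow> ?c"
  proof (cases "(e, t) \<in> P1")
    case True
    then have "(e, t) \<notin> Pq" using simple unfolding clocks_simple_def by blast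
    then show ?thesis using True by (simp add: active_def)
  next
    case False
    then show ?thesis using ring by (auto simp: active_def)
  qed
  show ?thesis
  proof (cases ?c)
    case True
    have "z \<in> ?A \<longleftrightarrow> z = e" for z using only_e e_iff True by blast
    moreover have "z - 1 = e \<longleftrightarrow> z = e + 1" for z by arith
    ultimately have "update F P1 Pq \<tau> t z = Fun.swap e (e + 1) \<tau> z" for z
      by (simp add: update_def Transposition.transpose_def)
    moreover have "clock_step F e ((e, t) \<in> P1) \<tau> = Fun.swap e (e + 1) \<tau>"
      using True unfolding clock_step_def by (rule if_P)
    ultimately show ?thesis by (simp add: fun_eq_iff)
  next
    case False
    then have "?A = {}" using only_e e_iff by blast
    moreover have "clock_step F e ((e, t) \<in> P1) \<tau> = \<tau>"
      using False unfolding clock_step_def by (rule if_not_P)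
    ultimately show ?thesis by (simp add: update_def fun_eq_iff)
  qed
qed

lemma update_no_ring:
  assumes "\<forall>x. (x, t) \<notin> P1 \<union> Pq"
  shows "update F P1 Pq \<tau> t = \<tau>"
proof -
  have "active F P1 Pq \<tau> t = {}" using assms by (auto simp: active_def)
  then show ?thesis by (simp add: update_def fun_eq_iff)
qed

lemma window_driven_coupling:
  assumes simple: "clocks_simple P1 Pq"
    and \<rho>1: "window_driven F1 P1 Pq T \<rho>1" and \<rho>2: "window_driven F2 P1 Pq T \<rho>2"
    and init: "P (\<rho>1 0) (\<rho>2 0)"
    and step: "\<And>u v e up. P u v \<Longrightarrow> P (clock_step F1 e up u) (clock_step F2 e up v)"
    and t: "0 \<le> t" "t \<le> T"
  shows "P (\<rho>1 t) (\<rho>2 t)"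
  using init _ _ t
proof (rule real_induct_right[where Q = "\<lambda>t. P (\<rho>1 t) (\<rho>2 t)"])
  fix t :: real assume "0 \<le> t" "t < T" "P (\<rho>1 t) (\<rho>2 t)"
  then have "eventually (\<lambda>s. \<rho>1 s = \<rho>1 t \<and> \<rho>2 s = \<rho>2 t) (at_right t)"
    by (intro eventually_conj window_drivenD(1)[OF \<rho>1] window_drivenD(1)[OF \<rho>2])
  then show "eventually (\<lambda>s. P (\<rho>1 s) (\<rho>2 s)) (at_right t)"
    by eventually_elim (use \<open>P (\<rho>1 t) (\<rho>2 t)\<close> in simp)
next
  fix t :: real assume t: "0 < t" "t \<le> T" and before: "\<And>s. 0 \<le> s \<Longrightarrow> s < t \<Longrightarrow> P (\<rho>1 s) (\<rho>2 s)"
  obtain \<tau>1 where \<tau>1: "eventually (\<lambda>s. \<rho>1 s = \<tau>1) (at_left t)" "\<rho>1 t = update F1 P1 Pq \<tau>1 t"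
    using window_drivenD(2)[OF \<rho>1 t] by blast
  obtain \<tau>2 where \<tau>2: "eventually (\<lambda>s. \<rho>2 s = \<tau>2) (at_left t)" "\<rho>2 t = update F2 P1 Pq \<tau>2 t"
    using window_drivenD(2)[OF \<rho>2 t] by blast
  have "eventually (\<lambda>s. s \<in> {0<..<t} \<and> \<rho>1 s = \<tau>1 \<and> \<rho>2 s = \<tau>2) (at_left t)"
    using eventually_at_left_real[OF t(1)] \<tau>1(1) \<tau>2(1) by (intro eventually_conj)
  then obtain s where "s \<in> {0<..<t}" "\<rho>1 s = \<tau>1" "\<rho>2 s = \<tau>2"
    using eventually_happens'[OF trivial_limit_at_left_real] by blast
  then have "P \<tau>1 \<tau>2" using before[of s] by auto
  show "P (\<rho>1 t) (\<rho>2 t)"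
  proof (cases "\<exists>e. (e, t) \<in> P1 \<union> Pq")
    case True
    then obtain e where "(e, t) \<in> P1 \<union> Pq" by blast
    then show ?thesis
      using \<tau>1(2) \<tau>2(2) step[OF \<open>P \<tau>1 \<tau>2\<close>] by (simp add: update_eq_clock_step[OF simple])
  next
    case False
    then show ?thesis using \<tau>1(2) \<tau>2(2) \<open>P \<tau>1 \<tau>2\<close> by (simp add: update_no_ring)
  qed
qed

section \<open>Comparison of the coupled trajectories\<close>

definition silent :: "(int \<times> real) set \<Rightarrow> int \<Rightarrow> real \<Rightarrow> bool" where
  "silent P x T \<longleftrightarrow> (\<forall>s. 0 < s \<and> s \<le> T \<longrightarrow> (x, s) \<notin> P)"

definition unbounded_silent_sites :: "(int \<times> real) set \<Rightarrow> bool" where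
  "unbounded_silent_sites P \<longleftrightarrow> (\<forall>T m. (\<exists>x\<le>m. silent P x T) \<and> (\<exists>x\<ge>m. silent P x T))"

lemma silent_mono: "silent P x T \<Longrightarrow> T' \<le> T \<Longrightarrow> silent P x T'"
  by (auto simp: silent_def)

lemma hN_restr_id: "hN N k (restr_id {1..int N} \<sigma>) = hN N k \<sigma>"
proof -
  have "ext_fin 1 (int N) (proj k (restr_id {1..int N} \<sigma>)) = ext_fin 1 (int N) (proj k \<sigma>)"
    by (auto simp: ext_fin_def proj_def restr_id_def fun_eq_iff)
  then show ?thesis by (simp add: hN_eq_height)
qed

lemma shuffle_window:
  assumes "driven {1..int N} P1 Pq \<sigma>"
  shows "window_driven {1..int N} P1 Pq T (\<lambda>t. restr_id {1..int N} (\<sigma> t))"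
  using assms by (rule driven_window) (auto simp: active_def)

lemma asep_window:
  assumes "driven UNIV P1 Pq \<zeta>" "silent (P1 \<union> Pq) a T" "silent (P1 \<union> Pq) b T"
  shows "window_driven {a<..b} P1 Pq T (\<lambda>t. restr_id {a<..b} (\<zeta> t))"
  using assms(1)
proof (rule driven_window)
  fix t \<tau> x assume "0 < t" "t \<le> T" "x \<in> active UNIV P1 Pq \<tau> t"
  then have "x \<noteq> a" "x \<noteq> b" using assms(2,3) by (auto simp: active_def silent_def)
  then show "x \<in> {a<..b} \<longleftrightarrow> x + 1 \<in> {a<..b}" by auto
qed auto

lemma asep_block_invariant:
  assumes simple: "clocks_simple P1 Pq" and \<zeta>: "driven UNIV P1 Pq \<zeta>" "\<zeta> 0 = id"
    and silent: "silent (P1 \<union> Pq) a T" "silent (P1 \<union> Pq) b T"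
    and t: "0 \<le> t" "t \<le> T" and z: "z \<in> {a<..b}"
  shows "\<zeta> t z \<in> {a<..b}"
proof -
  let ?\<rho> = "\<lambda>t. restr_id {a<..b} (\<zeta> t)"
  have w: "window_driven {a<..b} P1 Pq T ?\<rho>" using \<zeta>(1) silent by (rule asep_window)
  have "bij_betw (?\<rho> t) {a<..b} {a<..b} \<and> bij_betw (?\<rho> t) {a<..b} {a<..b}"
    using simple w w _ _ t
  proof (rule window_driven_coupling)
    have "?\<rho> 0 = id" using \<zeta>(2) by (simp add: restr_id_def fun_eq_iff)
    then show "bij_betw (?\<rho> 0) {a<..b} {a<..b} \<and> bij_betw (?\<rho> 0) {a<..b} {a<..b}" by simp
  qed (simp add: bij_betw_clock_step)
  then show ?thesis using z by (auto simp: restr_id_def dest: bij_betwE)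
qed

lemma shuffle_height_le:
  assumes simple: "clocks_simple P1 Pq"
    and \<xi>: "driven {1..int N} P1 Pq \<xi>" "\<forall>x\<in>{1..int N}. \<xi> 0 x = x"
    and \<sigma>: "driven {1..int N} P1 Pq \<sigma>" "\<forall>x\<in>{1..int N}. \<sigma> 0 x = w x" and w: "w \<in> perms N"
    and k: "0 \<le> k" "k \<le> int N" and t: "0 \<le> t"
  shows "hN N k (\<xi> t) x \<le> hN N k (\<sigma> t) x"
proof -
  let ?F = "{1..int N}"
  let ?P = "\<lambda>u v. bij_betw u ?F ?F \<and> bij_betw v ?F ?F \<and> (\<forall>x. hN N k u x \<le> hN N k v x)"
  have "?P (restr_id ?F (\<xi> t)) (restr_id ?F (\<sigma> t))"
    using simple shuffle_window[OF \<xi>(1)] shuffle_window[OF \<sigma>(1)] _ _ t order_refl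
  proof (rule window_driven_coupling)
    have "restr_id ?F (\<xi> 0) = id" "restr_id ?F (\<sigma> 0) = w"
      using \<xi>(2) \<sigma>(2) w by (auto simp: restr_id_def perms_def fun_eq_iff)
    then show "?P (restr_id ?F (\<xi> 0)) (restr_id ?F (\<sigma> 0))"
      using w hN_id_le[OF _ k] by (simp add: perms_def)
  qed (simp add: bij_betw_clock_step hN_clock_step_mono)
  then show ?thesis by (simp add: hN_restr_id)
qed

lemma asep_proj_window:
  assumes simple: "clocks_simple P1 Pq" and silent_sites: "unbounded_silent_sites (P1 \<union> Pq)"
    and \<zeta>: "driven UNIV P1 Pq \<zeta>" "\<zeta> 0 = id"
    and silent: "silent (P1 \<union> Pq) a t" "silent (P1 \<union> Pq) b t"
    and k: "a \<le> k" "k \<le> b" and t: "0 \<le> t"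
  shows "proj k (\<zeta> t) = proj k (restr_id {a<..b} (\<zeta> t))"
proof
  fix z
  consider "z \<le> a" | "z \<in> {a<..b}" | "b < z" by force
  then show "proj k (\<zeta> t) z = proj k (restr_id {a<..b} (\<zeta> t)) z"
  proof cases
    case 1
    obtain a' where "a' \<le> z - 1" "silent (P1 \<union> Pq) a' t"
      using silent_sites unfolding unbounded_silent_sites_def by blast
    then have "\<zeta> t z \<in> {a'<..a}" using 1 t by (intro asep_block_invariant[OF simple \<zeta> _ silent(1)]) auto
    then show ?thesis using 1 k by (auto simp: proj_def restr_id_def)
  next
    case 3
    obtain b' where "z \<le> b'" "silent (P1 \<union> Pq) b' t"
      using silent_sites unfolding unbounded_silent_sites_def by blast
    then have "\<zeta> t z \<in> {b<..b'}" using 3 t by (intro asep_block_invariant[OF simple \<zeta> silent(2)]) auto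
    then show ?thesis using 3 k by (auto simp: proj_def restr_id_def)
  qed (simp add: restr_id_def proj_def)
qed

lemma asep_height_ge:
  assumes simple: "clocks_simple P1 Pq" and silent_sites: "unbounded_silent_sites (P1 \<union> Pq)"
    and \<xi>: "driven {1..int N} P1 Pq \<xi>" "\<forall>x\<in>{1..int N}. \<xi> 0 x = x"
    and \<zeta>: "driven UNIV P1 Pq \<zeta>" "\<zeta> 0 = id"
    and k: "0 \<le> k" "k \<le> int N" and t: "0 \<le> t"
  shows "hN N k (\<xi> t) x \<le> hZ k (\<zeta> t) x"
proof -
  obtain a b where ab: "a \<le> 0" "int N \<le> b" and silent: "silent (P1 \<union> Pq) a t" "silent (P1 \<union> Pq) b t"
    using silent_sites unfolding unbounded_silent_sites_def by meson
  let ?F = "{1..int N}" and ?G = "{a<..b}"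
  let ?P = "\<lambda>u v. bij_betw u ?F ?F \<and> bij_betw v ?G ?G \<and> (\<forall>z. z \<notin> ?G \<longrightarrow> v z = z) \<and>
      (\<forall>x. hN N k u x \<le> hZ k v x)"
  have "?P (restr_id ?F (\<xi> t)) (restr_id ?G (\<zeta> t))"
    using simple shuffle_window[OF \<xi>(1)] asep_window[OF \<zeta>(1) silent] _ _ t order_refl
  proof (rule window_driven_coupling)
    have "restr_id ?F (\<xi> 0) = id" "restr_id ?G (\<zeta> 0) = id"
      using \<xi>(2) \<zeta>(2) by (auto simp: restr_id_def fun_eq_iff)
    moreover have "hN N k id x \<le> hZ k id x" for x
      using hN_id_le_max[OF k, of x] hZ_ge_max[of id 0 "int N" k x] k by (simp add: max_def)
    ultimately show "?P (restr_id ?F (\<xi> 0)) (restr_id ?G (\<zeta> 0))" by simp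
  next
    fix u v e up assume "?P u v"
    then show "?P (clock_step ?F e up u) (clock_step ?G e up v)"
      using ab k by (simp add: bij_betw_clock_step clock_step_outside hN_hZ_clock_step_mono)
  qed
  moreover have "hZ k (\<zeta> t) = hZ k (restr_id ?G (\<zeta> t))"
    using asep_proj_window[OF simple silent_sites \<zeta> silent] ab k t by (simp add: hZ_eq_height)
  ultimately show ?thesis by (simp add: hN_restr_id)
qed

lemma coupled_heights:
  assumes simple: "clocks_simple P1 Pq" and silent: "unbounded_silent_sites (P1 \<union> Pq)"
    and w: "w \<in> perms N" and lam0: "lam0 \<in> perms N"
  shows "\<forall>\<zeta> \<xi> lam \<xi>b.
       driven UNIV P1 Pq \<zeta> \<and> \<zeta> 0 = id \<and>
       driven {1..int N} P1 Pq \<xi> \<and> (\<forall>x\<in>{1..int N}. \<xi> 0 x = x) \<and>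
       driven {1..int N} P1 Pq lam \<and> (\<forall>x\<in>{1..int N}. lam 0 x = lam0 x) \<and>
       driven {1..int N} P1 Pq \<xi>b \<and> (\<forall>x\<in>{1..int N}. \<xi>b 0 x = w x)
       \<longrightarrow> (\<forall>k\<in>{0..int N}. \<forall>t\<ge>0. \<forall>x.
             hN N k (\<xi> t) x \<le> hN N k (lam t) x \<and>
             hN N k (\<xi> t) x \<le> hZ k (\<zeta> t) x \<and>
             hN N k (\<xi> t) x \<le> hN N k (\<xi>b t) x)"
proof (intro allI impI ballI conjI)
  fix \<zeta> \<xi> lam \<xi>b :: "real \<Rightarrow> int \<Rightarrow> int" and k x :: int and t :: real
  assume H: "driven UNIV P1 Pq \<zeta> \<and> \<zeta> 0 = id \<and>
       driven {1..int N} P1 Pq \<xi> \<and> (\<forall>x\<in>{1..int N}. \<xi> 0 x = x) \<and>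
       driven {1..int N} P1 Pq lam \<and> (\<forall>x\<in>{1..int N}. lam 0 x = lam0 x) \<and>
       driven {1..int N} P1 Pq \<xi>b \<and> (\<forall>x\<in>{1..int N}. \<xi>b 0 x = w x)"
    and k: "k \<in> {0..int N}" and t: "0 \<le> t"
  from H have \<zeta>: "driven UNIV P1 Pq \<zeta>" "\<zeta> 0 = id"
    and \<xi>: "driven {1..int N} P1 Pq \<xi>" "\<forall>x\<in>{1..int N}. \<xi> 0 x = x"
    and lam: "driven {1..int N} P1 Pq lam" "\<forall>x\<in>{1..int N}. lam 0 x = lam0 x"
    and \<xi>b: "driven {1..int N} P1 Pq \<xi>b" "\<forall>x\<in>{1..int N}. \<xi>b 0 x = w x"
    by simp_all
  from k have k: "0 \<le> k" "k \<le> int N" by simp_all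
  show "hN N k (\<xi> t) x \<le> hN N k (lam t) x" by (rule shuffle_height_le[OF simple \<xi> lam lam0 k t])
  show "hN N k (\<xi> t) x \<le> hZ k (\<zeta> t) x" by (rule asep_height_ge[OF simple silent \<xi> \<zeta> k t])
  show "hN N k (\<xi> t) x \<le> hN N k (\<xi>b t) x" by (rule shuffle_height_le[OF simple \<xi> \<xi>b w k t])
qed

section \<open>The random clocks\<close>

lemma AE_pair_fst:
  assumes "sigma_finite_measure M2" and "AE x in M1. P x"
  shows "AE z in M1 \<Otimes>\<^sub>M M2. P (fst z)"
proof -
  interpret sigma_finite_measure M2 by fact
  obtain A where A: "{x\<in>space M1. \<not> P x} \<subseteq> A" "emeasure M1 A = 0" "A \<in> sets M1"
    using AE_E[OF assms(2)] by blast
  then have "A \<times> space M2 \<in> null_sets (M1 \<Otimes>\<^sub>M M2)" by (intro times_in_null_sets1) auto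
  then show ?thesis by (rule AE_I') (use A in \<open>auto simp: space_pair_measure\<close>)
qed

lemma AE_pair_snd:
  assumes "sigma_finite_measure M2" and "AE x in M2. P x"
  shows "AE z in M1 \<Otimes>\<^sub>M M2. P (snd z)"
proof -
  interpret sigma_finite_measure M2 by fact
  obtain A where A: "{x\<in>space M2. \<not> P x} \<subseteq> A" "emeasure M2 A = 0" "A \<in> sets M2"
    using AE_E[OF assms(2)] by blast
  then have "space M1 \<times> A \<in> null_sets (M1 \<Otimes>\<^sub>M M2)" by (intro times_in_null_sets2) auto
  then show ?thesis by (rule AE_I') (use A in \<open>auto simp: space_pair_measure\<close>)
qed

lemma sets_exp1 [measurable_cong]: "sets exp1 = sets borel"
  by (simp add: exp1_def)

lemma space_exp1 [simp]: "space exp1 = UNIV"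
  by (simp add: exp1_def)

lemma prob_space_exp1: "prob_space exp1"
  unfolding exp1_def using prob_space_exponential_density[of 1] by simp

lemma AE_exp1_neq: "AE x in exp1. x \<noteq> c"
  unfolding exp1_def by (subst AE_density) (auto intro: AE_mp[OF AE_lborel_singleton[of c]])

lemma AE_exp1_pos: "AE x in exp1. 0 < x"
proof -
  have "AE x in exp1. 0 \<le> x"
    unfolding exp1_def by (subst AE_density) (auto simp: exponential_density_def)
  with AE_exp1_neq[of 0] show ?thesis by eventually_elim auto
qed

lemma emeasure_exp1_atMost:
  assumes "0 \<le> c"
  shows "emeasure exp1 {..c} = ennreal (1 - exp (- c))"
proof -
  interpret prob_space exp1 by (rule prob_space_exp1)
  have "distributed exp1 lborel (\<lambda>x. x) (exponential_density 1)"
    unfolding distributed_def by (auto simp: exp1_def distr_id2)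
  then have "\<P>(x in exp1. x \<le> c) = 1 - exp (- c * 1)"
    by (rule exponential_distributedD_le[OF _ assms]) simp
  moreover have "{x \<in> space exp1. x \<le> c} = {..c}" by auto
  ultimately show ?thesis by (simp add: emeasure_eq_measure)
qed

lemma product_prob_space_exp1: "product_prob_space (\<lambda>_::int \<times> nat. exp1)"
  by (simp add: product_prob_space_def product_prob_space_axioms_def product_sigma_finite_def
      prob_space_exp1 prob_space_imp_sigma_finite)

lemma prob_space_clock_space: "prob_space clock_space"
  unfolding clock_space_def by (rule prob_space_PiM) (rule prob_space_exp1)

lemma AE_clock_pos: "AE E in clock_space. \<forall>j. 0 < E j"
proof -
  interpret product_prob_space "\<lambda>_::int \<times> nat. exp1" UNIV by (rule product_prob_space_exp1)
  show ?thesis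
    unfolding AE_all_countable clock_space_def by (intro allI AE_component[OF _ AE_exp1_pos]) simp
qed

text \<open>Split off coordinate \<open>j\<close> and use Fubini: \<^const>\<open>exp1\<close> has no atoms.\<close>

lemma AE_clock_neq_indep:
  assumes Fm: "F \<in> borel_measurable clock_space" and indep: "\<And>E v. F (E(j := v)) = F E"
  shows "AE E in clock_space. E j \<noteq> F E"
proof -
  define I where "I = UNIV - {j}"
  let ?PI = "PiM I (\<lambda>_. exp1)"
  let ?upd = "\<lambda>(x, X). X(j := x)"
  interpret PI: prob_space ?PI by (rule prob_space_PiM) (rule prob_space_exp1)
  interpret E1: prob_space exp1 by (rule prob_space_exp1)
  interpret pair_sigma_finite exp1 ?PI by unfold_locales
  have UNIV_eq: "UNIV = I \<union> {j}" "insert j I = UNIV" by (auto simp: I_def)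
  have distr_eq: "distr (exp1 \<Otimes>\<^sub>M ?PI) clock_space ?upd = clock_space"
    using distr_pair_PiM_eq_PiM[of I "\<lambda>_. exp1" j] prob_space_exp1
    unfolding clock_space_def UNIV_eq(2) by simp
  have upd_meas: "?upd \<in> exp1 \<Otimes>\<^sub>M ?PI \<rightarrow>\<^sub>M clock_space"
  proof -
    have "(\<lambda>z. (snd z)(j := fst z)) \<in> exp1 \<Otimes>\<^sub>M ?PI \<rightarrow>\<^sub>M clock_space"
      unfolding clock_space_def by (rule measurable_fun_upd[OF UNIV_eq(1)]) measurable
    then show ?thesis by (simp add: case_prod_beta')
  qed
  define G where "G X = F (X(j := 0))" for X
  have "(\<lambda>X. X(j := 0)) \<in> ?PI \<rightarrow>\<^sub>M clock_space"
    unfolding clock_space_def by (rule measurable_fun_upd[OF UNIV_eq(1)]) measurable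
  then have Gm: "G \<in> borel_measurable ?PI"
    unfolding G_def using measurable_comp[OF _ Fm] by (simp add: comp_def)
  have G_sets: "{z \<in> space (exp1 \<Otimes>\<^sub>M ?PI). fst z \<noteq> G (snd z)} \<in> sets (exp1 \<Otimes>\<^sub>M ?PI)"
    using Gm by measurable
  have "AE X in ?PI. AE x in exp1. x \<noteq> G X" by (intro AE_I2 AE_exp1_neq)
  then have "AE z in exp1 \<Otimes>\<^sub>M ?PI. fst z \<noteq> G (snd z)"
    using AE_commute[of "\<lambda>x X. x \<noteq> G X", OF G_sets] AE_pair_iff[of "\<lambda>x X. x \<noteq> G X", OF G_sets] by simp
  moreover have "fst z \<noteq> G (snd z) \<longleftrightarrow> ?upd z j \<noteq> F (?upd z)" for z
    using indep[of "(snd z)(j := fst z)" 0] by (cases z) (simp add: G_def)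
  ultimately have "AE z in exp1 \<Otimes>\<^sub>M ?PI. ?upd z j \<noteq> F (?upd z)" by simp
  moreover have "{E \<in> space clock_space. E j \<noteq> F E} \<in> sets clock_space"
  proof (rule borel_measurable_neq[OF _ Fm])
    show "(\<lambda>E. E j) \<in> borel_measurable clock_space" unfolding clock_space_def by measurable
  qed
  ultimately have "AE E in distr (exp1 \<Otimes>\<^sub>M ?PI) clock_space ?upd. E j \<noteq> F E"
    by (subst AE_distr_iff[OF upd_meas])
  then show ?thesis unfolding distr_eq .
qed

lemma AE_clock_exists_gt:
  assumes X: "infinite X" and c: "0 \<le> c"
  shows "AE E in clock_space. \<exists>x\<in>X. c < E (x, 0)"
proof -
  interpret product_prob_space "\<lambda>_::int \<times> nat. exp1" UNIV by (rule product_prob_space_exp1)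
  interpret C: prob_space clock_space by (rule prob_space_clock_space)
  define A where "A = {E \<in> space clock_space. \<forall>x\<in>X. E (x, 0) \<le> c}"
  have A_sets: "A \<in> sets clock_space" unfolding A_def clock_space_def by measurable
  define p where "p = 1 - exp (- c)"
  have p: "0 \<le> p" "p < 1" using c by (auto simp: p_def)
  have bound: "C.prob A \<le> p ^ L" for L
  proof -
    obtain B where B: "finite B" "card B = L" "B \<subseteq> X" using infinite_arbitrarily_large[OF X] by blast
    define J where "J = B \<times> {0::nat}"
    have J: "finite J" "card J = L" using B by (auto simp: J_def card_cartesian_product)
    define AL where "AL = {E \<in> space clock_space. \<forall>j\<in>J. E j \<in> {..c}}"
    have "A \<subseteq> AL" using B by (auto simp: A_def AL_def J_def)
    have "emeasure clock_space AL = (\<Prod>j\<in>J. emeasure exp1 {..c})"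
      unfolding AL_def clock_space_def by (rule emeasure_PiM_Collect) (use J in auto)
    also have "\<dots> = ennreal (p ^ L)"
      using J c p by (simp add: emeasure_exp1_atMost p_def prod_ennreal ennreal_power)
    finally have "C.prob AL = p ^ L" using p by (simp add: C.emeasure_eq_measure)
    moreover have "AL \<in> sets clock_space" unfolding AL_def clock_space_def by measurable
    ultimately show ?thesis using C.finite_measure_mono[OF \<open>A \<subseteq> AL\<close>] by simp
  qed
  have "C.prob A = 0"
  proof (rule ccontr)
    assume "C.prob A \<noteq> 0"
    then have "0 < C.prob A" using measure_nonneg[of clock_space A] by linarith
    then obtain L where "p ^ L < C.prob A" using real_arch_pow_inv[OF _ p(2)] by blast
    then show False using bound[of L] by simp
  qed
  then have "A \<in> null_sets clock_space" using A_sets by (simp add: C.emeasure_eq_measure null_sets_def)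
  then show ?thesis by (rule AE_I') (auto simp: A_def not_less)
qed

lemma AE_clock_infinite_gt:
  assumes X: "infinite (X :: int set)" and c: "0 \<le> c"
  shows "AE E in clock_space. infinite {x\<in>X. c < E (x, 0)}"
proof -
  have "countable {S. finite S \<and> S \<subseteq> X}" by (rule countable_Collect_finite_subset) simp
  then have "AE E in clock_space. \<forall>S\<in>{S. finite S \<and> S \<subseteq> X}. \<exists>x\<in>X - S. c < E (x, 0)"
    using X c by (subst AE_ball_countable) (auto intro: AE_clock_exists_gt)
  then show ?thesis by eventually_elim (use X in \<open>auto 0 3\<close>)
qed

lemma AE_clock_pair_exists_gt:
  assumes X: "infinite (X :: int set)" and c: "0 \<le> c1" "0 \<le> c2"
  shows "AE z in clock_space \<Otimes>\<^sub>M clock_space. \<exists>x\<in>X. c1 < fst z (x, 0) \<and> c2 < snd z (x, 0)"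
proof -
  interpret C: prob_space clock_space by (rule prob_space_clock_space)
  interpret pair_sigma_finite clock_space clock_space by unfold_locales
  have "AE E1 in clock_space. AE E2 in clock_space. \<exists>x\<in>X. c1 < E1 (x, 0) \<and> c2 < E2 (x, 0)"
    using AE_clock_infinite_gt[OF X c(1)]
  proof eventually_elim
    case (elim E1)
    from AE_clock_exists_gt[OF elim c(2)]
    show ?case by eventually_elim auto
  qed
  then show ?thesis
    by (subst (asm) AE_pair_iff) (simp_all add: clock_space_def)
qed

lemma sum_atMost_eq_first_plus:
  fixes E :: "int \<times> nat \<Rightarrow> real"
  shows "(\<Sum>i\<le>n. E (x, i)) = E (x, 0) + (\<Sum>i\<in>{1..n}. E (x, i))"
proof -
  have "{..n} = insert 0 {1..n}" by auto
  then show ?thesis by simp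
qed

lemma measurable_arrival_sum [measurable]: "(\<lambda>E. \<Sum>i\<le>n. E (x, i)) \<in> borel_measurable clock_space"
  unfolding clock_space_def by measurable

lemma AE_arrival_neq_indep:
  assumes Fm: "F \<in> borel_measurable clock_space" and indep: "\<And>E v. F (E((y, 0) := v)) = F E"
  shows "AE E in clock_space. (\<Sum>i\<le>n. E (y, i)) \<noteq> F E"
proof -
  define G where "G E = F E - (\<Sum>i\<in>{1..n}. E (y, i))" for E
  have "G \<in> borel_measurable clock_space" using Fm unfolding G_def clock_space_def by measurable
  moreover have "G (E((y, 0) := v)) = G E" for E v by (auto simp: G_def indep intro!: sum.cong)
  ultimately have "AE E in clock_space. E (y, 0) \<noteq> G E" by (rule AE_clock_neq_indep)
  then show ?thesis by eventually_elim (auto simp: G_def sum_atMost_eq_first_plus)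
qed

lemma AE_arrivals_distinct:
  "AE E in clock_space. \<forall>x y n m. x \<noteq> y \<longrightarrow> (\<Sum>i\<le>n. E (x, i)) \<noteq> (\<Sum>i\<le>m. E (y, i))"
  unfolding AE_all_countable
proof (intro allI)
  fix x y :: int and n m :: nat
  show "AE E in clock_space. x \<noteq> y \<longrightarrow> (\<Sum>i\<le>n. E (x, i)) \<noteq> (\<Sum>i\<le>m. E (y, i))"
  proof (cases "x = y")
    case False
    have "AE E in clock_space. (\<Sum>i\<le>m. E (y, i)) \<noteq> (\<Sum>i\<le>n. E (x, i))"
      using False by (intro AE_arrival_neq_indep) (auto simp: clock_space_def intro!: sum.cong)
    then show ?thesis by eventually_elim auto
  qed simp
qed

lemma AE_arrivals_cross:
  assumes q: "0 < q"
  shows "AE z in clock_space \<Otimes>\<^sub>M clock_space.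
    \<forall>x y n m. (\<Sum>i\<le>n. fst z (x, i)) \<noteq> (\<Sum>i\<le>m. snd z (y, i)) / q"
proof -
  interpret C: prob_space clock_space by (rule prob_space_clock_space)
  interpret pair_sigma_finite clock_space clock_space by unfold_locales
  have "AE E1 in clock_space. AE E2 in clock_space. \<forall>x y n m. (\<Sum>i\<le>n. E1 (x, i)) \<noteq> (\<Sum>i\<le>m. E2 (y, i)) / q"
  proof (rule AE_I2)
    fix E1 :: "int \<times> nat \<Rightarrow> real"
    have "AE E2 in clock_space. (\<Sum>i\<le>n. E1 (x, i)) \<noteq> (\<Sum>i\<le>m. E2 (y, i)) / q" for x y n m
    proof -
      have "AE E2 in clock_space. (\<Sum>i\<le>m. E2 (y, i)) \<noteq> q * (\<Sum>i\<le>n. E1 (x, i))"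
        by (rule AE_arrival_neq_indep) simp_all
      then show ?thesis by eventually_elim (use q in \<open>auto simp: field_simps\<close>)
    qed
    then show "AE E2 in clock_space. \<forall>x y n m. (\<Sum>i\<le>n. E1 (x, i)) \<noteq> (\<Sum>i\<le>m. E2 (y, i)) / q"
      unfolding AE_all_countable by blast
  qed
  then show ?thesis by (subst (asm) AE_pair_iff) measurable
qed

lemma first_le_sum_arrival:
  fixes E :: "int \<times> nat \<Rightarrow> real"
  assumes "\<forall>j. 0 < E j"
  shows "E (x, 0) \<le> (\<Sum>i\<le>n. E (x, i))"
  using assms by (intro member_le_sum) (auto intro: less_imp_le)

lemma clocks_simple_arrivals:
  fixes E1 E2 :: "int \<times> nat \<Rightarrow> real"
  assumes d1: "\<forall>x y n m. x \<noteq> y \<longrightarrow> (\<Sum>i\<le>n. E1 (x, i)) \<noteq> (\<Sum>i\<le>m. E1 (y, i))"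
    and d2: "\<forall>x y n m. x \<noteq> y \<longrightarrow> (\<Sum>i\<le>n. E2 (x, i)) \<noteq> (\<Sum>i\<le>m. E2 (y, i))"
    and cross: "0 < q \<longrightarrow> (\<forall>x y n m. (\<Sum>i\<le>n. E1 (x, i)) \<noteq> (\<Sum>i\<le>m. E2 (y, i)) / q)"
  shows "clocks_simple (arrivals 1 E1) (arrivals q E2)"
  unfolding clocks_simple_def
proof (intro conjI allI impI)
  show "arrivals 1 E1 \<inter> arrivals q E2 = {}" using cross by (auto simp: arrivals_def)
next
  fix x y t
  assume x: "(x, t) \<in> arrivals 1 E1 \<union> arrivals q E2" and y: "(y, t) \<in> arrivals 1 E1 \<union> arrivals q E2"
  have mem: "(\<exists>n. t = (\<Sum>i\<le>n. E1 (z, i))) \<or> (0 < q \<and> (\<exists>n. t = (\<Sum>i\<le>n. E2 (z, i)) / q))"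
    if "(z, t) \<in> arrivals 1 E1 \<union> arrivals q E2" for z
    using that by (auto simp: arrivals_def)
  consider
      (one_one) n m where "t = (\<Sum>i\<le>n. E1 (x, i))" "t = (\<Sum>i\<le>m. E1 (y, i))"
    | (one_q) n m where "t = (\<Sum>i\<le>n. E1 (x, i))" "t = (\<Sum>i\<le>m. E2 (y, i)) / q" "0 < q"
    | (q_one) n m where "t = (\<Sum>i\<le>n. E2 (x, i)) / q" "t = (\<Sum>i\<le>m. E1 (y, i))" "0 < q"
    | (q_q) n m where "t = (\<Sum>i\<le>n. E2 (x, i)) / q" "t = (\<Sum>i\<le>m. E2 (y, i)) / q" "0 < q"
    using mem[OF x] mem[OF y] by blast
  then show "x = y"
  proof cases
    case one_one
    then show ?thesis using d1 by metis
  next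
    case one_q
    then show ?thesis using cross by metis
  next
    case q_one
    then show ?thesis using cross by metis
  next
    case q_q
    then have "(\<Sum>i\<le>n. E2 (x, i)) = (\<Sum>i\<le>m. E2 (y, i))" by simp
    then show ?thesis using d2 by metis
  qed
qed

lemma silent_arrivals:
  fixes E1 E2 :: "int \<times> nat \<Rightarrow> real"
  assumes pos: "\<forall>j. 0 < E1 j" "\<forall>j. 0 < E2 j" and late: "T < E1 (x, 0)" "q * T < E2 (x, 0)"
  shows "silent (arrivals 1 E1 \<union> arrivals q E2) x T"
  unfolding silent_def
proof (intro allI impI)
  fix s assume s: "0 < s \<and> s \<le> T"
  have "s \<noteq> (\<Sum>i\<le>n. E1 (x, i))" for n
    using first_le_sum_arrival[OF pos(1), of x n] late(1) s by linarith
  moreover have "s \<noteq> (\<Sum>i\<le>n. E2 (x, i)) / q" if "0 < q" for n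
  proof
    assume "s = (\<Sum>i\<le>n. E2 (x, i)) / q"
    then have "q * s = (\<Sum>i\<le>n. E2 (x, i))" using that by simp
    moreover have "q * s \<le> q * T" using s that by simp
    ultimately show False using first_le_sum_arrival[OF pos(2), of x n] late(2) by linarith
  qed
  ultimately show "(x, s) \<notin> arrivals 1 E1 \<union> arrivals q E2" by (auto simp: arrivals_def)
qed

lemma unbounded_silent_sites_arrivals:
  fixes E1 E2 :: "int \<times> nat \<Rightarrow> real"
  assumes pos: "\<forall>j. 0 < E1 j" "\<forall>j. 0 < E2 j"
    and late: "\<forall>T::nat. \<forall>m::int.
      (\<exists>x\<in>{..m}. real T < E1 (x, 0) \<and> q * real T < E2 (x, 0)) \<and>
      (\<exists>x\<in>{m..}. real T < E1 (x, 0) \<and> q * real T < E2 (x, 0))"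
  shows "unbounded_silent_sites (arrivals 1 E1 \<union> arrivals q E2)"
  unfolding unbounded_silent_sites_def
proof (intro allI conjI)
  fix T :: real and m :: int
  let ?P = "arrivals 1 E1 \<union> arrivals q E2" and ?T = "real (nat \<lceil>T\<rceil>)"
  have T: "T \<le> ?T" by linarith
  have late_T: "(\<exists>x\<in>{..m}. ?T < E1 (x, 0) \<and> q * ?T < E2 (x, 0)) \<and>
      (\<exists>x\<in>{m..}. ?T < E1 (x, 0) \<and> q * ?T < E2 (x, 0))"
    using late by blast
  obtain x where "x \<le> m" "?T < E1 (x, 0)" "q * ?T < E2 (x, 0)" using late_T by auto
  then have "silent ?P x ?T" using pos by (intro silent_arrivals) auto
  then show "\<exists>x\<le>m. silent ?P x T" using \<open>x \<le> m\<close> T silent_mono by blast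
  obtain x where "m \<le> x" "?T < E1 (x, 0)" "q * ?T < E2 (x, 0)" using late_T by auto
  then have "silent ?P x ?T" using pos by (intro silent_arrivals) auto
  then show "\<exists>x\<ge>m. silent ?P x T" using \<open>m \<le> x\<close> T silent_mono by blast
qed

lemma AE_clocks_good:
  assumes q: "0 \<le> q"
  shows "AE z in clock_space \<Otimes>\<^sub>M clock_space.
    clocks_simple (arrivals 1 (fst z)) (arrivals q (snd z)) \<and>
    unbounded_silent_sites (arrivals 1 (fst z) \<union> arrivals q (snd z))"
proof -
  interpret C: prob_space clock_space by (rule prob_space_clock_space)
  have sf: "sigma_finite_measure clock_space" by unfold_locales
  have pos: "AE z in clock_space \<Otimes>\<^sub>M clock_space. (\<forall>j. 0 < fst z j) \<and> (\<forall>j. 0 < snd z j)"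
    using AE_pair_fst[OF sf AE_clock_pos] AE_pair_snd[OF sf AE_clock_pos] by eventually_elim simp
  have distinct: "AE z in clock_space \<Otimes>\<^sub>M clock_space.
      (\<forall>x y n m. x \<noteq> y \<longrightarrow> (\<Sum>i\<le>n. fst z (x, i)) \<noteq> (\<Sum>i\<le>m. fst z (y, i))) \<and>
      (\<forall>x y n m. x \<noteq> y \<longrightarrow> (\<Sum>i\<le>n. snd z (x, i)) \<noteq> (\<Sum>i\<le>m. snd z (y, i)))"
    using AE_pair_fst[OF sf AE_arrivals_distinct] AE_pair_snd[OF sf AE_arrivals_distinct]
    by eventually_elim simp
  have cross: "AE z in clock_space \<Otimes>\<^sub>M clock_space.
      0 < q \<longrightarrow> (\<forall>x y n m. (\<Sum>i\<le>n. fst z (x, i)) \<noteq> (\<Sum>i\<le>m. snd z (y, i)) / q)"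
    by (cases "0 < q") (simp_all add: AE_arrivals_cross)
  have late: "AE z in clock_space \<Otimes>\<^sub>M clock_space. \<forall>T::nat. \<forall>m::int.
      (\<exists>x\<in>{..m}. real T < fst z (x, 0) \<and> q * real T < snd z (x, 0)) \<and>
      (\<exists>x\<in>{m..}. real T < fst z (x, 0) \<and> q * real T < snd z (x, 0))"
    unfolding AE_all_countable AE_conj_iff using q
    by (intro allI conjI AE_clock_pair_exists_gt) (simp_all add: infinite_Iic infinite_Ici)
  from pos distinct cross late show ?thesis
    by eventually_elim (simp add: clocks_simple_arrivals unbounded_silent_sites_arrivals)
qed

section \<open>The Mallows measure\<close>

lemma finite_perms: "finite (perms N)"
proof -
  let ?S = "{1..int N}"
  let ?ext = "\<lambda>g x. if x \<in> ?S then g x else x"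
  have "perms N \<subseteq> ?ext ` (?S \<rightarrow>\<^sub>E ?S)"
  proof
    fix w assume w: "w \<in> perms N"
    then have "restrict w ?S \<in> ?S \<rightarrow>\<^sub>E ?S" "w = ?ext (restrict w ?S)"
      unfolding perms_def bij_betw_def by (auto simp: fun_eq_iff)
    then show "w \<in> ?ext ` (?S \<rightarrow>\<^sub>E ?S)" by blast
  qed
  moreover have "finite (?ext ` (?S \<rightarrow>\<^sub>E ?S))" by (intro finite_imageI finite_PiE) auto
  ultimately show ?thesis by (rule finite_subset)
qed

lemma sigma_finite_mallows: "sigma_finite_measure (mallows N q)"
proof -
  let ?f = "\<lambda>w. ennreal (mallows_weight N q w / (\<Sum>v\<in>perms N. mallows_weight N q v))"
  have "emeasure (mallows N q) (space (mallows N q)) = (\<integral>\<^sup>+ w. ?f w \<partial>count_space UNIV)"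
    unfolding mallows_def by (subst emeasure_density) auto
  also have "\<dots> = (\<Sum>w\<in>perms N. ?f w)"
    by (rule nn_integral_count_space'[OF finite_perms]) (auto simp: mallows_weight_def)
  finally have "emeasure (mallows N q) (space (mallows N q)) \<noteq> \<top>"
    by (simp add: ennreal_sum_eq_top[OF finite_perms])
  then interpret finite_measure "mallows N q" by (intro finite_measureI) simp
  show ?thesis by unfold_locales
qed

lemma AE_mallows_perms: "AE w in mallows N q. w \<in> perms N"
  unfolding mallows_def by (subst AE_density) (auto simp: mallows_weight_def)

theorem lemma2p2:
  fixes q :: real and N :: nat and lam0 :: "int \<Rightarrow> int"
  assumes "0 \<le> q" and "q < 1" and "lam0 \<in> perms N"
  shows "AE \<omega> in (clock_space \<Otimes>\<^sub>M clock_space) \<Otimes>\<^sub>M mallows N q.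
    (let P1 = arrivals 1 (fst (fst \<omega>)); Pq = arrivals q (snd (fst \<omega>)); w = snd \<omega> in
     \<forall>\<zeta> \<xi> lam \<xi>b.
       driven UNIV P1 Pq \<zeta> \<and> \<zeta> 0 = id \<and>
       driven {1..int N} P1 Pq \<xi> \<and> (\<forall>x\<in>{1..int N}. \<xi> 0 x = x) \<and>
       driven {1..int N} P1 Pq lam \<and> (\<forall>x\<in>{1..int N}. lam 0 x = lam0 x) \<and>
       driven {1..int N} P1 Pq \<xi>b \<and> (\<forall>x\<in>{1..int N}. \<xi>b 0 x = w x)
       \<longrightarrow> (\<forall>k\<in>{0..int N}. \<forall>t\<ge>0. \<forall>x.
             hN N k (\<xi> t) x \<le> hN N k (lam t) x \<and>
             hN N k (\<xi> t) x \<le> hZ k (\<zeta> t) x \<and>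
             hN N k (\<xi> t) x \<le> hN N k (\<xi>b t) x))"
proof -
  have sf: "sigma_finite_measure (mallows N q)" by (rule sigma_finite_mallows)
  have "AE \<omega> in (clock_space \<Otimes>\<^sub>M clock_space) \<Otimes>\<^sub>M mallows N q.
      clocks_simple (arrivals 1 (fst (fst \<omega>))) (arrivals q (snd (fst \<omega>))) \<and>
      unbounded_silent_sites (arrivals 1 (fst (fst \<omega>)) \<union> arrivals q (snd (fst \<omega>)))"
    by (rule AE_pair_fst[OF sf AE_clocks_good[OF \<open>0 \<le> q\<close>]])
  moreover have "AE \<omega> in (clock_space \<Otimes>\<^sub>M clock_space) \<Otimes>\<^sub>M mallows N q. snd \<omega> \<in> perms N"
    by (rule AE_pair_snd[OF sf AE_mallows_perms])
  ultimately show ?thesis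
  proof eventually_elim
    case (elim \<omega>)
    then show ?case unfolding Let_def by (intro coupled_heights) (simp_all add: \<open>lam0 \<in> perms N\<close>)
  qed
qed

end
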